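(* Let $j\in[m]$, $r_j\in[0,1]$, and let $\mathbf{x}=(\mathbf{x}_1,\dots,\mathbf{x}_n)$ and $\mathbf{y}=(\mathbf{y}_1,\dots,\mathbf{y}_n)$ be Generalized Nash equilibria of $G^{(2)}$ with $\mathbf{x}_T^{(j)}=\mathbf{y}_T^{(j)}=r_j$. If $0<x_{ij}<y_{ij}$ for some $i\in[n]$, then $\mathbf{x}_i$ is of Type II or $\mathbf{y}_i$ is of Type II.
   Context: $G^{(2)}$ is a Fragile multi-CPR Game with $n\ge1$ players and $m\ge1$ CPRs: $[k]=\{1,\dots,k\}$, $C_m=\{(x_1,\dots,x_m)\in[0,1]^m:\sum_j x_j\le1\}$, $\mathcal{C}_n=\prod_{i\in[n]}C_m$, $\mathcal{C}_{-i}=\prod_{[n]\setminus\{i\}}C_m$. A profile is $\mathbf{x}=(\mathbf{x}_1,\dots,\mathbf{x}_n)$, $\mathbf{x}_i=(x_{i1},\dots,x_{im})$; write $\mathbf{x}=(\mathbf{x}_i,\mathbf{x}_{-i})$; $\mathbf{x}_T^{(j)}=\sum_i x_{ij}$, $\mathbf{x}_T^{j|i}=\sum_{\ell\ne i}x_{\ell j}$. Each CPR $j$ has return rate $\mathcal{R}_j(t)>1$ and failure probability $p_j(t)\in[0,1]$; each player $i$ has parameters $a_i,k_i$. $\mathcal{F}_{ij}(t)=(\mathcal{R}_j(t)-1)^{a_i}(1-p_j(t))-k_ip_j(t)$; utility $\mathcal{V}_i(\mathbf{x}_i;\mathbf{x}_{-i})=\sum_j x_{ij}^{a_i}\mathcal{F}_{ij}(\mathbf{x}_T^{(j)})$.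 Assumption: (1) $p_j(0)=0$, $p_j(t)=1$ for $t\ge1$; (2) $a_i\in(0,1]$, $k_i>0$; (3) each $\mathcal{F}_{ij}$ (continuous on $[0,1]$) has strictly negative first and second derivatives on $(0,1)$. $\omega_{ij}\in(0,1)$ is the unique zero of $\mathcal{F}_{ij}$ in $(0,1)$. $A(\mathbf{x}_{-i})=\{j:\mathbf{x}_T^{j|i}<\omega_{ij}\}$. $\vartheta_i(\mathbf{x}_{-i})=C_m\cap\big(\prod_{j\in A(\mathbf{x}_{-i})}[0,\omega_{ij}-\mathbf{x}_T^{j|i}]\times\prod_{j\notin A(\mathbf{x}_{-i})}\{0\}\big)$. A Generalized Nash equilibrium is $\mathbf{x}\in\mathcal{C}_n$ with, for all $i$, $\mathbf{x}_i\in\vartheta_i(\mathbf{x}_{-i})$ and $\mathcal{V}_i(\mathbf{x}_i;\mathbf{x}_{-i})\ge\mathcal{V}_i(\mathbf{z};\mathbf{x}_{-i})$ for all $\mathbf{z}\in\vartheta_i(\mathbf{x}_{-i})$. $\psi_{ij}(x;s)=x\,\mathcal{F}_{ij}'(x+s)+a_i\mathcal{F}_{ij}(x+s)$. For a GNE $\mathbf{x}$: $J_{\mathbf{x}_{-i}}=\{j\in A(\mathbf{x}_{-i}):x_{ij}\ne0\}$; $\mathbf{x}_i$ is of Type I if $\sum_{j\in J_{\mathbf{x}_{-i}}}x_{ij}<1$ and $\psi_{ij}(x_{ij};\mathbf{x}_T^{j|i})=0$ for all $j\in J_{\mathbf{x}_{-i}}$; of Type II if $\sum_{j\in J_{\mathbf{x}_{-i}}}x_{ij}=1$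 and there is $\kappa_0\ge0$ with $x_{ij}^{a_i-1}\psi_{ij}(x_{ij};\mathbf{x}_T^{j|i})=\kappa_0$ for all $j\in J_{\mathbf{x}_{-i}}$. *)

theory Defs
  imports "HOL-Analysis.Analysis"
begin

text \<open>Players are indexed by 1..n, CPRs by 1..m.  A profile is
  x :: nat => nat => real, with x i j the investment of player i in CPR j.
  R j t: return rate of CPR j; p j t: failure probability of CPR j;
  a i, k i: player parameters.\<close>

definition F :: "(nat \<Rightarrow> real \<Rightarrow> real) \<Rightarrow> (nat \<Rightarrow> real \<Rightarrow> real) \<Rightarrow> (nat \<Rightarrow> real) \<Rightarrow> (nat \<Rightarrow> real)
    \<Rightarrow> nat \<Rightarrow> nat \<Rightarrow> real \<Rightarrow> real" where
  "F R p a k i j t = (R j t - 1) powr (a i) * (1 - p j t) - k i * p j t"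

definition game_assms :: "nat \<Rightarrow> nat \<Rightarrow> (nat \<Rightarrow> real \<Rightarrow> real) \<Rightarrow> (nat \<Rightarrow> real \<Rightarrow> real)
    \<Rightarrow> (nat \<Rightarrow> real) \<Rightarrow> (nat \<Rightarrow> real) \<Rightarrow> bool" where
  "game_assms n m R p a k \<longleftrightarrow> n \<ge> 1 \<and> m \<ge> 1 \<and>
     (\<forall>j\<in>{1..m}. (\<forall>t\<in>{0..1}. R j t > 1) \<and> (\<forall>t\<ge>0. 0 \<le> p j t \<and> p j t \<le> 1)
        \<and> p j 0 = 0 \<and> (\<forall>t\<ge>1. p j t = 1)) \<and>
     (\<forall>i\<in>{1..n}. 0 < a i \<and> a i \<le> 1 \<and> k i > 0) \<and>
     (\<forall>i\<in>{1..n}. \<forall>j\<in>{1..m}.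
        continuous_on {0..1} (F R p a k i j) \<and>
        (\<forall>t\<in>{0<..<1}. (F R p a k i j has_real_derivative deriv (F R p a k i j) t) (at t)
            \<and> deriv (F R p a k i j) t < 0
            \<and> (deriv (F R p a k i j) has_real_derivative deriv (deriv (F R p a k i j)) t) (at t)
            \<and> deriv (deriv (F R p a k i j)) t < 0))"

definition omega where
  "omega R p a k i j = (THE w. 0 < w \<and> w < 1 \<and> F R p a k i j w = 0)"

definition CPR_simplex :: "nat \<Rightarrow> (nat \<Rightarrow> real) set" where
  "CPR_simplex m = {z. (\<forall>j\<in>{1..m}. 0 \<le> z j \<and> z j \<le> 1) \<and> (\<Sum>j=1..m. z j) \<le> 1}"

definition profiles :: "nat \<Rightarrow> nat \<Rightarrow> (nat \<Rightarrow> nat \<Rightarrow> real) set" where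
  "profiles n m = {x. \<forall>i\<in>{1..n}. x i \<in> CPR_simplex m}"

definition xT :: "nat \<Rightarrow> (nat \<Rightarrow> nat \<Rightarrow> real) \<Rightarrow> nat \<Rightarrow> real" where
  "xT n x j = (\<Sum>i=1..n. x i j)"

definition xT_others :: "nat \<Rightarrow> (nat \<Rightarrow> nat \<Rightarrow> real) \<Rightarrow> nat \<Rightarrow> nat \<Rightarrow> real" where
  "xT_others n x i j = (\<Sum>l\<in>{1..n} - {i}. x l j)"

definition Aset where
  "Aset n m R p a k x i = {j\<in>{1..m}. xT_others n x i j < omega R p a k i j}"

definition vartheta where
  "vartheta n m R p a k x i = CPR_simplex m \<inter>
     {z. (\<forall>j\<in>Aset n m R p a k x i. 0 \<le> z j \<and> z j \<le> omega R p a k i j - xT_others n x i j)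
       \<and> (\<forall>j\<in>{1..m} - Aset n m R p a k x i. z j = 0)}"

definition V where
  "V n m R p a k i z x = (\<Sum>j=1..m. z j powr (a i) * F R p a k i j (z j + xT_others n x i j))"

definition GNE where
  "GNE n m R p a k x \<longleftrightarrow> x \<in> profiles n m \<and>
     (\<forall>i\<in>{1..n}. x i \<in> vartheta n m R p a k x i \<and>
        (\<forall>z\<in>vartheta n m R p a k x i. V n m R p a k i (x i) x \<ge> V n m R p a k i z x))"

definition psi where
  "psi R p a k i j y s = y * deriv (F R p a k i j) (y + s) + a i * F R p a k i j (y + s)"

definition Jset where
  "Jset n m R p a k x i = {j\<in>Aset n m R p a k x i. x i j \<noteq> 0}"

definition typeI where
  "typeI n m R p a k x i \<longleftrightarrow> (\<Sum>j\<in>Jset n m R p a k x i. x i j) < 1 \<and>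
     (\<forall>j\<in>Jset n m R p a k x i. psi R p a k i j (x i j) (xT_others n x i j) = 0)"

definition typeII where
  "typeII n m R p a k x i \<longleftrightarrow> (\<Sum>j\<in>Jset n m R p a k x i. x i j) = 1 \<and>
     (\<exists>\<kappa>0\<ge>0. \<forall>j\<in>Jset n m R p a k x i.
        x i j powr (a i - 1) * psi R p a k i j (x i j) (xT_others n x i j) = \<kappa>0)"

end

theory Submission
  imports Defs
begin

text \<open>At an equilibrium each player's strategy satisfies first-order conditions in the
  marginal payoff x^(a-1) \<psi> of every CPR it uses: the marginal payoff is
  nonnegative, it is nonpositive if the budget is not exhausted, and it is the same for all
  CPRs used, since otherwise shifting investment between two of them pays off.  On the line
  x + s = r the function \<psi> equals x F'(r) + a F(r), which is strictly decreasing in x.  So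
  if 0 < x_ij < y_ij with equal totals r, then
  \<psi>(x_ij) > \<psi>(y_ij) \<ge> 0; hence the budget of player i in x is exhausted,
  and the equal marginal payoffs make x_i of Type II.\<close>

lemma sum_fun_upd:
  fixes f :: "'a \<Rightarrow> 'b::ab_group_add"
  assumes "finite A" "j \<in> A"
  shows "sum (f(j := v)) A = sum f A - f j + v"
  using assms by (simp add: sum.remove[OF assms] sum.remove[OF assms, of "f(j := v)"])

lemma ex1_zero_of_decreasing:
  fixes f :: "real \<Rightarrow> real"
  assumes "a < b" and cont: "continuous_on {a..b} f" and "0 < f a" "f b < 0"
    and deriv_neg: "\<And>t. a < t \<Longrightarrow> t < b \<Longrightarrow> \<exists>D. DERIV f t :> D \<and> D < 0"
  shows "\<exists>!w. a < w \<and> w < b \<and> f w = 0"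
proof -
  obtain w where "a \<le> w" "w \<le> b" "f w = 0"
    using IVT2'[of f b 0 a] assms by force
  moreover have "w \<noteq> a" "w \<noteq> b"
    using assms \<open>f w = 0\<close> by auto
  ultimately have "a < w" "w < b"
    by linarith+
  have decreasing: "f v < f u" if "a < u" "u < v" "v < b" for u v
  proof (rule DERIV_neg_imp_decreasing_open[OF \<open>u < v\<close>])
    show "\<exists>D. DERIV f t :> D \<and> D < 0" if "u < t" "t < v" for t
      using deriv_neg \<open>a < u\<close> \<open>v < b\<close> that by simp
    show "continuous_on {u..v} f"
      using continuous_on_subset[OF cont] \<open>a < u\<close> \<open>v < b\<close> by simp
  qed
  show ?thesis
  proof (rule ex1I)
    show "a < w \<and> w < b \<and> f w = 0"
      using \<open>a < w\<close> \<open>w < b\<close> \<open>f w = 0\<close> by blast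
    show "w' = w" if "a < w' \<and> w' < b \<and> f w' = 0" for w'
      using decreasing[of w' w] decreasing[of w w'] that \<open>a < w\<close> \<open>w < b\<close> \<open>f w = 0\<close>
      by (cases w' w rule: linorder_cases) auto
  qed
qed

lemma DERIV_nonpos_at_right_max:
  fixes f :: "real \<Rightarrow> real"
  assumes "DERIV f x :> D" "0 < e" "\<And>t. 0 < t \<Longrightarrow> t < e \<Longrightarrow> f (x + t) \<le> f x"
  shows "D \<le> 0"
proof (rule ccontr)
  assume "\<not> D \<le> 0"
  then obtain d where d: "d > 0" "\<And>t. 0 < t \<Longrightarrow> t < d \<Longrightarrow> f x < f (x + t)"
    using DERIV_pos_inc_right[OF assms(1)] by auto
  define t where "t = min d e / 2"
  have "0 < t" "t < d" "t < e"
    using d(1) \<open>0 < e\<close> by (auto simp: t_def)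
  then show False
    using d(2) assms(3) by (meson not_le)
qed

lemma DERIV_nonneg_at_left_max:
  fixes f :: "real \<Rightarrow> real"
  assumes "DERIV f x :> D" "0 < e" "\<And>t. 0 < t \<Longrightarrow> t < e \<Longrightarrow> f (x - t) \<le> f x"
  shows "0 \<le> D"
proof (rule ccontr)
  assume "\<not> 0 \<le> D"
  then obtain d where d: "d > 0" "\<And>t. 0 < t \<Longrightarrow> t < d \<Longrightarrow> f x < f (x - t)"
    using DERIV_neg_dec_left[OF assms(1)] by auto
  define t where "t = min d e / 2"
  have "0 < t" "t < d" "t < e"
    using d(1) \<open>0 < e\<close> by (auto simp: t_def)
  then show False
    using d(2) assms(3) by (meson not_le)
qed

lemma DERIV_powr_mult_shift:
  fixes f :: "real \<Rightarrow> real"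
  assumes "0 < u" "DERIV f (u + s) :> D"
  shows "DERIV (\<lambda>v. v powr c * f (v + s)) u :> u powr (c - 1) * (u * D + c * f (u + s))"
proof -
  have "DERIV (\<lambda>v. f (v + s)) u :> D"
    using assms(2) by (simp add: DERIV_shift)
  from DERIV_mult[OF has_real_derivative_powr[OF assms(1)] this]
  have "DERIV (\<lambda>v. v powr c * f (v + s)) u :> c * u powr (c - 1) * f (u + s) + D * u powr c" .
  moreover have "u powr c = u powr (c - 1) * u"
    using assms(1) by (simp add: powr_diff)
  ultimately show ?thesis
    by (simp add: algebra_simps)
qed

definition cpr_payoff where
  "cpr_payoff R p a k i j s v = v powr a i * F R p a k i j (v + s)"

definition marginal_payoff where
  "marginal_payoff R p a k i j s v = v powr (a i - 1) * psi R p a k i j v s"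

lemma V_eq_sum_cpr_payoff:
  "V n m R p a k i z x = (\<Sum>l=1..m. cpr_payoff R p a k i l (xT_others n x i l) (z l))"
  by (simp add: V_def cpr_payoff_def)

lemma V_fun_upd:
  assumes "j \<in> {1..m}"
  shows "V n m R p a k i (z(j := v)) x = V n m R p a k i z x
    - cpr_payoff R p a k i j (xT_others n x i j) (z j) + cpr_payoff R p a k i j (xT_others n x i j) v"
proof -
  let ?g = "\<lambda>l. cpr_payoff R p a k i l (xT_others n x i l) (z l)"
  have "V n m R p a k i (z(j := v)) x = sum (?g(j := cpr_payoff R p a k i j (xT_others n x i j) v)) {1..m}"
    unfolding V_eq_sum_cpr_payoff by (intro sum.cong) auto
  then show ?thesis
    using sum_fun_upd[of "{1..m}" j ?g] assms by (simp add: V_eq_sum_cpr_payoff)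
qed

lemma fun_upd_in_vartheta:
  assumes z: "z \<in> vartheta n m R p a k x i" and jA: "j \<in> Aset n m R p a k x i"
    and "0 \<le> v" "v + xT_others n x i j \<le> omega R p a k i j"
    and budget: "(\<Sum>l=1..m. z l) - z j + v \<le> 1"
  shows "z(j := v) \<in> vartheta n m R p a k x i"
proof -
  have j: "j \<in> {1..m}"
    using jA by (simp add: Aset_def)
  have "0 \<le> (\<Sum>l\<in>{1..m} - {j}. z l)"
    using z by (auto simp: vartheta_def CPR_simplex_def intro: sum_nonneg)
  with budget j have "v \<le> 1"
    by (simp add: sum.remove)
  then show ?thesis
    using assms j sum_fun_upd[of "{1..m}" j z v] by (auto simp: vartheta_def CPR_simplex_def)
qed

lemma xT_eq_add_xT_others:
  "i \<in> {1..n} \<Longrightarrow> xT n x j = x i j + xT_others n x i j"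
  unfolding xT_def xT_others_def by (simp add: sum.remove)

lemma GNE_nonneg:
  "GNE n m R p a k x \<Longrightarrow> i \<in> {1..n} \<Longrightarrow> j \<in> {1..m} \<Longrightarrow> 0 \<le> x i j"
  by (simp add: GNE_def profiles_def CPR_simplex_def)

lemma GNE_xT_others_nonneg:
  assumes "GNE n m R p a k x" "j \<in> {1..m}"
  shows "0 \<le> xT_others n x i j"
  unfolding xT_others_def by (rule sum_nonneg) (use assms GNE_nonneg in auto)

context
  fixes n m :: nat and R p :: "nat \<Rightarrow> real \<Rightarrow> real" and a k :: "nat \<Rightarrow> real"
  assumes game: "game_assms n m R p a k"
begin

lemma F_continuous: "i \<in> {1..n} \<Longrightarrow> j \<in> {1..m} \<Longrightarrow> continuous_on {0..1} (F R p a k i j)"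
  using game by (simp add: game_assms_def)

lemma F_has_deriv:
  "i \<in> {1..n} \<Longrightarrow> j \<in> {1..m} \<Longrightarrow> 0 < t \<Longrightarrow> t < 1 \<Longrightarrow>
    DERIV (F R p a k i j) t :> deriv (F R p a k i j) t"
  using game by (simp add: game_assms_def)

lemma F_deriv_neg:
  "i \<in> {1..n} \<Longrightarrow> j \<in> {1..m} \<Longrightarrow> 0 < t \<Longrightarrow> t < 1 \<Longrightarrow> deriv (F R p a k i j) t < 0"
  using game by (simp add: game_assms_def)

lemma F_0_pos:
  assumes "i \<in> {1..n}" "j \<in> {1..m}"
  shows "0 < F R p a k i j 0"
proof -
  have "1 < R j 0" "p j 0 = 0"
    using game assms by (auto simp: game_assms_def)
  then show ?thesis
    by (simp add: F_def)
qed

lemma F_1_neg: "i \<in> {1..n} \<Longrightarrow> j \<in> {1..m} \<Longrightarrow> F R p a k i j 1 < 0"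
  using game by (simp add: game_assms_def F_def)

lemma omega_unique_zero:
  assumes "i \<in> {1..n}" "j \<in> {1..m}"
  shows omega_pos: "0 < omega R p a k i j"
    and omega_less_1: "omega R p a k i j < 1"
    and F_omega: "F R p a k i j (omega R p a k i j) = 0"
proof -
  have "\<exists>D. DERIV (F R p a k i j) t :> D \<and> D < 0" if "0 < t" "t < 1" for t
    using F_has_deriv F_deriv_neg assms that by blast
  then have "\<exists>!w. 0 < w \<and> w < 1 \<and> F R p a k i j w = 0"
    using assms by (intro ex1_zero_of_decreasing F_continuous F_0_pos F_1_neg) auto
  from theI'[OF this] show "0 < omega R p a k i j" "omega R p a k i j < 1"
    "F R p a k i j (omega R p a k i j) = 0"
    unfolding omega_def by auto
qed

lemma cpr_payoff_has_marginal:
  assumes "i \<in> {1..n}" "j \<in> {1..m}" "0 < v" "0 < v + s" "v + s < 1"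
  shows "DERIV (cpr_payoff R p a k i j s) v :> marginal_payoff R p a k i j s v"
  using DERIV_powr_mult_shift[OF assms(3) F_has_deriv[OF assms(1,2,4,5)], of "a i"]
  unfolding cpr_payoff_def marginal_payoff_def psi_def by simp

context
  fixes x :: "nat \<Rightarrow> nat \<Rightarrow> real" and i :: nat
  assumes GNE: "GNE n m R p a k x" and i: "i \<in> {1..n}"
begin

lemma GNE_in_vartheta: "x i \<in> vartheta n m R p a k x i"
  using GNE i by (simp add: GNE_def)

lemma GNE_best_response:
  "z \<in> vartheta n m R p a k x i \<Longrightarrow> V n m R p a k i z x \<le> V n m R p a k i (x i) x"
  using GNE i by (simp add: GNE_def)

lemma GNE_budget: "(\<Sum>l=1..m. x i l) \<le> 1"
  using GNE_in_vartheta by (simp add: vartheta_def CPR_simplex_def)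

lemma GNE_pos_in_Aset:
  assumes "j \<in> {1..m}" "0 < x i j"
  shows "j \<in> Aset n m R p a k x i"
proof (rule ccontr)
  assume "j \<notin> Aset n m R p a k x i"
  then have "x i j = 0"
    using GNE_in_vartheta assms(1) by (simp add: vartheta_def)
  with assms(2) show False
    by simp
qed

lemma GNE_le_omega:
  assumes "j \<in> {1..m}" "0 < x i j"
  shows "x i j + xT_others n x i j \<le> omega R p a k i j"
  using GNE_in_vartheta GNE_pos_in_Aset[OF assms] by (force simp: vartheta_def)

lemma GNE_cpr_payoff_has_marginal:
  assumes "j \<in> {1..m}" "0 < x i j"
  shows "DERIV (cpr_payoff R p a k i j (xT_others n x i j)) (x i j)
    :> marginal_payoff R p a k i j (xT_others n x i j) (x i j)"
  using GNE_le_omega[OF assms] omega_less_1[OF i assms(1)] GNE_xT_others_nonneg[OF GNE assms(1), of i] assms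
  by (intro cpr_payoff_has_marginal i) auto

lemma GNE_cpr_payoff_le:
  assumes "j \<in> {1..m}" "(x i)(j := v) \<in> vartheta n m R p a k x i"
  shows "cpr_payoff R p a k i j (xT_others n x i j) v \<le> cpr_payoff R p a k i j (xT_others n x i j) (x i j)"
  using GNE_best_response[OF assms(2)] V_fun_upd[OF assms(1), of n R p a k i "x i" v x] by simp

lemma GNE_psi_nonneg:
  assumes j: "j \<in> {1..m}" and pos: "0 < x i j"
  shows "0 \<le> psi R p a k i j (x i j) (xT_others n x i j)"
proof -
  have "0 \<le> marginal_payoff R p a k i j (xT_others n x i j) (x i j)"
  proof (rule DERIV_nonneg_at_left_max[OF GNE_cpr_payoff_has_marginal[OF j pos] pos])
    fix t assume "0 < t" "t < x i j"
    then have "(x i)(j := x i j - t) \<in> vartheta n m R p a k x i"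
      using GNE_le_omega[OF j pos] GNE_budget
      by (intro fun_upd_in_vartheta GNE_in_vartheta GNE_pos_in_Aset[OF j pos]) auto
    then show "cpr_payoff R p a k i j (xT_others n x i j) (x i j - t)
        \<le> cpr_payoff R p a k i j (xT_others n x i j) (x i j)"
      by (rule GNE_cpr_payoff_le[OF j])
  qed
  then show ?thesis
    using pos by (simp add: marginal_payoff_def zero_le_mult_iff)
qed

text \<open>At the capacity bound \<psi> reduces to x F'(\<omega>) < 0.\<close>

lemma GNE_below_omega:
  assumes j: "j \<in> {1..m}" and pos: "0 < x i j"
  shows "x i j + xT_others n x i j < omega R p a k i j"
proof (rule ccontr)
  assume "\<not> ?thesis"
  then have at_omega: "x i j + xT_others n x i j = omega R p a k i j"
    using GNE_le_omega[OF j pos] by linarith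
  have "psi R p a k i j (x i j) (xT_others n x i j) = x i j * deriv (F R p a k i j) (omega R p a k i j)"
    by (simp add: psi_def at_omega F_omega[OF i j])
  also have "\<dots> < 0"
    using pos F_deriv_neg[OF i j omega_pos[OF i j] omega_less_1[OF i j]] by (simp add: mult_pos_neg)
  finally show False
    using GNE_psi_nonneg[OF j pos] by linarith
qed

lemma GNE_psi_nonpos_if_slack:
  assumes j: "j \<in> {1..m}" and pos: "0 < x i j" and slack: "(\<Sum>l=1..m. x i l) < 1"
  shows "psi R p a k i j (x i j) (xT_others n x i j) \<le> 0"
proof -
  let ?e = "min (omega R p a k i j - xT_others n x i j - x i j) (1 - (\<Sum>l=1..m. x i l))"
  have "marginal_payoff R p a k i j (xT_others n x i j) (x i j) \<le> 0"
  proof (rule DERIV_nonpos_at_right_max[OF GNE_cpr_payoff_has_marginal[OF j pos]])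
    show "0 < ?e"
      using GNE_below_omega[OF j pos] slack by simp
    fix t assume "0 < t" "t < ?e"
    then have "(x i)(j := x i j + t) \<in> vartheta n m R p a k x i"
      using pos by (intro fun_upd_in_vartheta GNE_in_vartheta GNE_pos_in_Aset[OF j pos]) auto
    then show "cpr_payoff R p a k i j (xT_others n x i j) (x i j + t)
        \<le> cpr_payoff R p a k i j (xT_others n x i j) (x i j)"
      by (rule GNE_cpr_payoff_le[OF j])
  qed
  then show ?thesis
    using pos by (simp add: marginal_payoff_def mult_le_0_iff)
qed

lemma GNE_marginal_payoff_le:
  assumes j: "j \<in> {1..m}" and pos: "0 < x i j"
    and j': "j' \<in> {1..m}" "j' \<noteq> j" and pos': "0 < x i j'"
  shows "marginal_payoff R p a k i j (xT_others n x i j) (x i j)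
    \<le> marginal_payoff R p a k i j' (xT_others n x i j') (x i j')"
proof -
  let ?g = "cpr_payoff R p a k i j (xT_others n x i j)"
    and ?g' = "cpr_payoff R p a k i j' (xT_others n x i j')"
  let ?M = "marginal_payoff R p a k i j (xT_others n x i j) (x i j)"
    and ?M' = "marginal_payoff R p a k i j' (xT_others n x i j') (x i j')"
  let ?e = "min (omega R p a k i j - xT_others n x i j - x i j) (x i j')"
  have "DERIV (\<lambda>t. ?g (x i j + t)) 0 :> ?M * 1"
    by (rule DERIV_chain2) (use GNE_cpr_payoff_has_marginal[OF j pos] in \<open>auto intro!: derivative_eq_intros\<close>)
  moreover have "DERIV (\<lambda>t. ?g' (x i j' - t)) 0 :> ?M' * (- 1)"
    by (rule DERIV_chain2) (use GNE_cpr_payoff_has_marginal[OF j'(1) pos'] in \<open>auto intro!: derivative_eq_intros\<close>)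
  ultimately have "DERIV (\<lambda>t. ?g (x i j + t) + ?g' (x i j' - t)) 0 :> ?M * 1 + ?M' * (- 1)"
    by (rule DERIV_add)
  then have "?M * 1 + ?M' * (- 1) \<le> 0"
  proof (rule DERIV_nonpos_at_right_max)
    show "0 < ?e"
      using GNE_below_omega[OF j pos] pos' by simp
    fix t assume t: "0 < t" "t < ?e"
    have "(x i)(j' := x i j' - t) \<in> vartheta n m R p a k x i"
      using t GNE_budget GNE_le_omega[OF j'(1) pos']
      by (intro fun_upd_in_vartheta GNE_in_vartheta GNE_pos_in_Aset[OF j'(1) pos']) auto
    then have "(x i)(j' := x i j' - t, j := x i j + t) \<in> vartheta n m R p a k x i"
      by (rule fun_upd_in_vartheta[OF _ GNE_pos_in_Aset[OF j pos]])
        (use t pos GNE_budget j' sum_fun_upd[of "{1..m}" "j'" "x i" "x i j' - t"] in auto)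
    then have "V n m R p a k i ((x i)(j' := x i j' - t, j := x i j + t)) x \<le> V n m R p a k i (x i) x"
      by (rule GNE_best_response)
    then show "?g (x i j + (0 + t)) + ?g' (x i j' - (0 + t)) \<le> ?g (x i j + 0) + ?g' (x i j' - 0)"
      using V_fun_upd[OF j, of n R p a k i "(x i)(j' := x i j' - t)" "x i j + t" x]
        V_fun_upd[OF j'(1), of n R p a k i "x i" "x i j' - t" x] j'(2)
      by simp
  qed
  then show ?thesis
    by simp
qed

lemma GNE_sum_Jset: "(\<Sum>l\<in>Jset n m R p a k x i. x i l) = (\<Sum>l=1..m. x i l)"
proof (rule sum.mono_neutral_left)
  show "Jset n m R p a k x i \<subseteq> {1..m}"
    by (auto simp: Jset_def Aset_def)
  show "\<forall>l\<in>{1..m} - Jset n m R p a k x i. x i l = 0"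
    using GNE_pos_in_Aset GNE_nonneg[OF GNE i] by (force simp: Jset_def)
qed simp

lemma GNE_typeII_if_budget_exhausted:
  assumes exhausted: "(\<Sum>l=1..m. x i l) = 1"
  shows "typeII n m R p a k x i"
proof -
  let ?J = "Jset n m R p a k x i"
  have sum_J: "(\<Sum>l\<in>?J. x i l) = 1"
    using GNE_sum_Jset exhausted by simp
  then obtain j where j: "j \<in> ?J"
    by fastforce
  have J_pos: "l \<in> {1..m} \<and> 0 < x i l" if "l \<in> ?J" for l
    using that GNE_nonneg[OF GNE i, of l] by (force simp: Jset_def Aset_def)
  define \<kappa> where "\<kappa> = marginal_payoff R p a k i j (xT_others n x i j) (x i j)"
  have "0 \<le> \<kappa>"
    using GNE_psi_nonneg J_pos[OF j] by (simp add: \<kappa>_def marginal_payoff_def)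
  moreover have "marginal_payoff R p a k i l (xT_others n x i l) (x i l) = \<kappa>" if "l \<in> ?J" for l
    using GNE_marginal_payoff_le J_pos[OF that] J_pos[OF j] unfolding \<kappa>_def
    by (cases "l = j") (auto intro: order.antisym)
  ultimately show ?thesis
    using sum_J by (auto simp: typeII_def marginal_payoff_def)
qed

end

end

theorem lemma11:
  fixes n m :: nat and R p :: "nat \<Rightarrow> real \<Rightarrow> real" and a k :: "nat \<Rightarrow> real"
    and x y :: "nat \<Rightarrow> nat \<Rightarrow> real" and i j :: nat and r :: real
  assumes "game_assms n m R p a k"
    and "j \<in> {1..m}" and "0 \<le> r" and "r \<le> 1"
    and "GNE n m R p a k x" and "GNE n m R p a k y"
    and "xT n x j = r" and "xT n y j = r"
    and "i \<in> {1..n}" and "0 < x i j" and "x i j < y i j"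
  shows "typeII n m R p a k x i \<or> typeII n m R p a k y i"
proof -
  let ?F = "F R p a k i j"
  have y_pos: "0 < y i j"
    using assms(10,11) by linarith
  have total_x: "x i j + xT_others n x i j = r" and total_y: "y i j + xT_others n y i j = r"
    using xT_eq_add_xT_others[OF assms(9)] assms(7,8) by auto
  have "0 < r" "r < 1"
    using total_x assms(10) GNE_xT_others_nonneg[OF assms(5,2), of i]
      GNE_below_omega[OF assms(1,5,9,2,10)] omega_less_1[OF assms(1,9,2)] by linarith+
  then have F'_neg: "deriv ?F r < 0"
    using F_deriv_neg[OF assms(1,9,2)] by blast
  have psi_y: "0 \<le> y i j * deriv ?F r + a i * ?F r"
    using GNE_psi_nonneg[OF assms(1,6,9,2) y_pos] total_y by (simp add: psi_def)
  have "\<not> (\<Sum>l=1..m. x i l) < 1"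
  proof
    assume "(\<Sum>l=1..m. x i l) < 1"
    then have "x i j * deriv ?F r + a i * ?F r \<le> 0"
      using GNE_psi_nonpos_if_slack[OF assms(1,5,9,2,10)] total_x by (simp add: psi_def)
    moreover have "y i j * deriv ?F r < x i j * deriv ?F r"
      using assms(11) F'_neg by (simp add: mult_strict_right_mono_neg)
    ultimately show False
      using psi_y by linarith
  qed
  then have "(\<Sum>l=1..m. x i l) = 1"
    using GNE_budget[OF assms(1,5,9)] by linarith
  then show ?thesis
    using GNE_typeII_if_budget_exhausted[OF assms(1,5,9)] by blast
qed

end
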